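(* Let $(\eta_\ell)_{\ell\in\mathbb{N}}\subseteq[0,\infty)$ and let $D:\mathbb{N}\to(1,\infty)$ satisfy $\sum_{k=\ell}^{\ell+N}\eta_k^2\le D(N)\eta_\ell^2$ for all $\ell,N\in\mathbb{N}$. Suppose there exists $N_0\in\mathbb{N}$ with $$q_{\log}:=\log(D(N_0))-\sum_{j=1}^{N_0}D(j)^{-1}<0,$$ and suppose $(\eta_\ell)$ is quasi-monotone: there is $C_{\rm mon}>0$ with $\eta_{\ell+k}^2\le C_{\rm mon}\eta_\ell^2$ for all $\ell,k\in\mathbb{N}$. Then, with $q:=\exp(q_{\log}/N_0)<1$ and $C:=C_{\rm mon}\exp(-q_{\log})$, $$\eta_{\ell+k}^2\le C q^k\eta_\ell^2\quad\text{for all }k,\ell\in\mathbb{N}.$$ *)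

theory Defs
  imports "HOL-Analysis.Analysis"
begin

end

theory Submission
  imports Defs
begin

text \<open>
  Write \<open>a = \<eta>\<^sup>2\<close> and let \<open>T j\<close> be the sum of \<open>a k\<close> over \<open>l + j \<le> k \<le> l + N\<close>.
  The hypothesis applied at index \<open>l + j\<close> says that the first summand of \<open>T j\<close> is at least
  \<open>T j / D (N - j)\<close>, so dropping it shrinks the tail by the factor
  \<open>1 - 1 / D (N - j) \<le> exp (- 1 / D (N - j))\<close>. After \<open>N\<close> such steps only \<open>a (l + N)\<close> is
  left, whence \<open>a (l + N) \<le> exp (- \<Sum>j 1 / D j) T 0 \<le> exp qlog * a l\<close>. Iterating this
  contraction over blocks of length \<open>N0\<close> and absorbing the incomplete last block by
  quasi-monotonicity gives linear convergence.
\<close>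

lemma tail_sum_drop_first:
  fixes a D :: "nat \<Rightarrow> real"
  assumes a_nonneg: "\<And>l. a l \<ge> 0"
    and D_gt1: "\<And>N. D N > 1"
    and D_bound: "\<And>l N. (\<Sum>k=l..l+N. a k) \<le> D N * a l"
    and "j < N"
  shows "(\<Sum>k=l+Suc j..l+N. a k) \<le> exp (- 1 / D (N - j)) * (\<Sum>k=l+j..l+N. a k)"
proof -
  let ?T = "\<lambda>j. \<Sum>k=l+j..l+N. a k"
  have split: "?T j = a (l + j) + ?T (Suc j)"
    using \<open>j < N\<close> by (simp add: sum.atLeast_Suc_atMost)
  have "?T j \<le> D (N - j) * a (l + j)"
    using D_bound[of "l + j" "N - j"] \<open>j < N\<close> by simp
  then have first: "?T j / D (N - j) \<le> a (l + j)"
    using D_gt1[of "N - j"] by (simp add: divide_le_eq mult.commute)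
  have "?T (Suc j) = ?T j - a (l + j)"
    using split by simp
  also have "\<dots> \<le> ?T j - ?T j / D (N - j)"
    using first by simp
  also have "\<dots> = (1 - 1 / D (N - j)) * ?T j"
    by (simp add: algebra_simps)
  also have "\<dots> \<le> exp (- 1 / D (N - j)) * ?T j"
    using exp_ge_add_one_self[of "- 1 / D (N - j)"]
    by (intro mult_right_mono) (simp_all add: sum_nonneg a_nonneg)
  finally show ?thesis .
qed

lemma tail_sum_decay:
  fixes a D :: "nat \<Rightarrow> real"
  assumes a_nonneg: "\<And>l. a l \<ge> 0"
    and D_gt1: "\<And>N. D N > 1"
    and D_bound: "\<And>l N. (\<Sum>k=l..l+N. a k) \<le> D N * a l"
    and "j \<le> N"
  shows "(\<Sum>k=l+j..l+N. a k) \<le> exp (- (\<Sum>i=N-j+1..N. 1 / D i)) * (\<Sum>k=l..l+N. a k)"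
  using \<open>j \<le> N\<close>
proof (induction j)
  case 0
  then show ?case by simp
next
  case (Suc j)
  let ?S = "\<lambda>j. \<Sum>i=N-j+1..N. 1 / D i"
  have "j < N" using Suc.prems by simp
  have "N - Suc j + 1 = N - j"
    using \<open>j < N\<close> by simp
  then have S_Suc: "?S (Suc j) = 1 / D (N - j) + ?S j"
    using sum.atLeast_Suc_atMost[of "N - j" N "\<lambda>i. 1 / D i"] by simp
  have "(\<Sum>k=l+Suc j..l+N. a k) \<le> exp (- 1 / D (N - j)) * (\<Sum>k=l+j..l+N. a k)"
    by (rule tail_sum_drop_first[OF a_nonneg D_gt1 D_bound \<open>j < N\<close>])
  also have "\<dots> \<le> exp (- 1 / D (N - j)) * (exp (- ?S j) * (\<Sum>k=l..l+N. a k))"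
    using Suc.IH Suc.prems by (simp add: mult_left_mono)
  also have "\<dots> = exp (- ?S (Suc j)) * (\<Sum>k=l..l+N. a k)"
    unfolding S_Suc by (simp add: mult_exp_exp algebra_simps)
  finally show ?case .
qed

lemma contraction_after_N_steps:
  fixes a D :: "nat \<Rightarrow> real"
  assumes a_nonneg: "\<And>l. a l \<ge> 0"
    and D_gt1: "\<And>N. D N > 1"
    and D_bound: "\<And>l N. (\<Sum>k=l..l+N. a k) \<le> D N * a l"
  shows "a (l + N) \<le> exp (ln (D N) - (\<Sum>i=1..N. 1 / D i)) * a l"
proof -
  have "a (l + N) = (\<Sum>k=l+N..l+N. a k)" by simp
  also have "\<dots> \<le> exp (- (\<Sum>i=1..N. 1 / D i)) * (\<Sum>k=l..l+N. a k)"
    using tail_sum_decay[OF a_nonneg D_gt1 D_bound, of N N l] by simp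
  also have "\<dots> \<le> exp (- (\<Sum>i=1..N. 1 / D i)) * (D N * a l)"
    using D_bound[of l N] by (simp add: mult_left_mono)
  also have "\<dots> = exp (ln (D N) - (\<Sum>i=1..N. 1 / D i)) * a l"
    using D_gt1[of N] by (simp add: exp_diff exp_minus field_simps)
  finally show ?thesis .
qed

lemma iterated_contraction:
  fixes a :: "nat \<Rightarrow> real"
  assumes "\<rho> \<ge> 0" and step: "\<And>l. a (l + N) \<le> \<rho> * a l"
  shows "a (l + m * N) \<le> \<rho> ^ m * a l"
proof (induction m)
  case 0
  then show ?case by simp
next
  case (Suc m)
  have "a (l + Suc m * N) = a ((l + m * N) + N)"
    by (simp add: algebra_simps)
  also have "\<dots> \<le> \<rho> * a (l + m * N)"
    by (rule step)
  also have "\<dots> \<le> \<rho> * (\<rho> ^ m * a l)"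
    using Suc.IH \<open>\<rho> \<ge> 0\<close> by (rule mult_left_mono)
  finally show ?case by simp
qed

lemma exp_power_div_le:
  fixes t :: real and N :: nat
  assumes "t \<le> 0" and "N > 0"
  shows "exp t ^ (k div N) \<le> exp (- t) * exp (t / real N) ^ k"
proof -
  have "real k < (real (k div N) + 1) * real N"
    using dividend_less_div_times[OF \<open>N > 0\<close>, of k]
    by (simp add: algebra_simps flip: of_nat_mult of_nat_add of_nat_less_iff)
  then have "real k / real N \<le> real (k div N) + 1"
    using \<open>N > 0\<close> by (simp add: divide_le_eq)
  then have "t * (real (k div N) + 1) \<le> t * (real k / real N)"
    using \<open>t \<le> 0\<close> by (rule mult_left_mono_neg)
  then show ?thesis
    by (simp add: exp_of_nat_mult[symmetric] mult_exp_exp algebra_simps)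
qed

lemma quasi_monotone_geometric_decay:
  fixes a :: "nat \<Rightarrow> real"
  assumes a_nonneg: "\<And>l. a l \<ge> 0"
    and "t \<le> 0" and "N > 0" and "Cmon > 0"
    and step: "\<And>l. a (l + N) \<le> exp t * a l"
    and quasi_mono: "\<And>l k. a (l + k) \<le> Cmon * a l"
  shows "a (l + k) \<le> Cmon * exp (- t) * exp (t / real N) ^ k * a l"
proof -
  have "a (l + k) = a ((l + k div N * N) + k mod N)"
    by (metis add.assoc div_mult_mod_eq)
  also have "\<dots> \<le> Cmon * a (l + k div N * N)"
    by (rule quasi_mono)
  also have "\<dots> \<le> Cmon * (exp t ^ (k div N) * a l)"
    using iterated_contraction[of "exp t" a N] step \<open>Cmon > 0\<close>
    by (simp add: mult_left_mono)
  also have "\<dots> \<le> Cmon * (exp (- t) * exp (t / real N) ^ k * a l)"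
    using exp_power_div_le[OF \<open>t \<le> 0\<close> \<open>N > 0\<close>] \<open>Cmon > 0\<close> a_nonneg[of l]
    by (intro mult_left_mono mult_right_mono) simp_all
  finally show ?thesis by (simp add: mult.assoc)
qed

theorem mainTheorem3:
  fixes eta :: "nat \<Rightarrow> real" and D :: "nat \<Rightarrow> real"
    and N0 :: nat and Cmon :: real
  assumes eta_nonneg: "\<And>l. eta l \<ge> 0"
    and D_gt1: "\<And>N. D N > 1"
    and D_bound: "\<And>l N. (\<Sum>k=l..l+N. (eta k)\<^sup>2) \<le> D N * (eta l)\<^sup>2"
    and qlog_neg: "ln (D N0) - (\<Sum>j=1..N0. 1 / D j) < 0"
    and Cmon_pos: "Cmon > 0"
    and quasi_mono: "\<And>l k. (eta (l + k))\<^sup>2 \<le> Cmon * (eta l)\<^sup>2"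
  shows "let qlog = ln (D N0) - (\<Sum>j=1..N0. 1 / D j);
             q = exp (qlog / real N0);
             C = Cmon * exp (- qlog)
         in q < 1 \<and> (\<forall>k l. (eta (l + k))\<^sup>2 \<le> C * q ^ k * (eta l)\<^sup>2)"
proof -
  define qlog where "qlog = ln (D N0) - (\<Sum>j=1..N0. 1 / D j)"
  have "qlog < 0" using qlog_neg by (simp add: qlog_def)
  moreover have "N0 > 0"
    using \<open>qlog < 0\<close> D_gt1[of 0] by (cases N0) (simp_all add: qlog_def)
  ultimately have "exp (qlog / real N0) < 1"
    by (simp add: divide_neg_pos)
  moreover have "(eta (l + N0))\<^sup>2 \<le> exp qlog * (eta l)\<^sup>2" for l
    unfolding qlog_def by (rule contraction_after_N_steps) (simp_all add: D_gt1 D_bound)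
  then have "(eta (l + k))\<^sup>2 \<le> Cmon * exp (- qlog) * exp (qlog / real N0) ^ k * (eta l)\<^sup>2"
    for k l
    using \<open>qlog < 0\<close> \<open>N0 > 0\<close> Cmon_pos quasi_mono
    by (intro quasi_monotone_geometric_decay[of "\<lambda>l. (eta l)\<^sup>2"]) simp_all
  ultimately show ?thesis
    unfolding Let_def qlog_def[symmetric] by blast
qed

end
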